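(* Let $\mathbf{X}$ be an exchangeable random vector in $\mathbb{R}^n$ with $\mathbb{E}[X_k^2]<\infty$ for all $k\in[n]$, and let $\mathbf{Y}$ satisfy $\mathbf{Y}|\mathbf{X}=\mathbf{x}\sim\mathcal{N}(\mathbf{x},\sigma^2\mathbf{I}_n)$ with $\sigma>0$. Define $$g(\mathbf{y})=\mathbb{P}[\mathbf{X}\in\vec{\mathbb{R}}_n|\mathbf{Y}=\mathbf{y}]\left(1-\mathbb{P}[\mathbf{X}\in\vec{\mathbb{R}}_n|\mathbf{Y}=\mathbf{y}]\right)$$ and $$\Delta_{\mathrm{up}}=\sum_{\pi\in\mathcal{P}}\mathbb{E}\left[\|\mathbf{X}\|^2 g(\mathbf{P}_\pi\mathbf{Y})\,\middle|\,\mathbf{Y}\in\vec{\mathbb{R}}_n\right]$$ (which depends on $\sigma$). Then $$\lim_{\sigma\to 0}\Delta_{\mathrm{up}}=0,\qquad \lim_{\sigma\to\infty}\Delta_{\mathrm{up}}=\mathbb{E}[\|\mathbf{X}\|^2]\left(1-\frac{1}{n!}\right).$$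
   Context: $\vec{\mathbb{R}}_n$ is the set of vectors in $\mathbb{R}^n$ whose entries are in ascending order. $[n]=\{1,\dots,n\}$; $\mathcal{P}$ is the set of permutations of $[n]$ and $\mathbf{P}_\pi$ the permutation matrix of $\pi$. A random vector is exchangeable if its distribution is invariant under every permutation of its coordinates.
   Formalization: X is also assumed to have almost surely pairwise distinct coordinates, so ties among its entries have probability zero. The paper assumes this as well. *)

theory Defs
  imports "HOL-Probability.Probability"
begin

text \<open>Vectors in R^n are modelled as real^'n with a finite linearly ordered index type 'n
  (n = CARD('n)). The law of the random vector X is a probability measure M on the Borel sets.\<close>

definition ascending :: "(real ^ ('n::{finite,linorder})) set" where
  "ascending = {x. \<forall>i j. i \<le> j \<longrightarrow> x $ i \<le> x $ j}"

definition perm_vec :: "('n::finite \<Rightarrow> 'n) \<Rightarrow> real ^ 'n \<Rightarrow> real ^ 'n" where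
  "perm_vec p x = (\<chi> i. x $ p i)"

definition exchangeable :: "(real ^ ('n::finite)) measure \<Rightarrow> bool" where
  "exchangeable M \<longleftrightarrow> (\<forall>p. p permutes (UNIV :: 'n set) \<longrightarrow> distr M borel (perm_vec p) = M)"

definition gauss :: "real \<Rightarrow> real ^ ('n::finite) \<Rightarrow> real" where
  "gauss \<sigma> v = (\<Prod>i\<in>UNIV. normal_density 0 \<sigma> (v $ i))"

text \<open>Version of P[X \<in> A | Y = y] given by Bayes' formula, where Y | X = x ~ N(x, sigma^2 I).\<close>
definition post_prob :: "(real ^ ('n::finite)) measure \<Rightarrow> real \<Rightarrow> (real ^ 'n) set \<Rightarrow> real ^ 'n \<Rightarrow> real" where
  "post_prob M \<sigma> A y =
     (\<integral>x. indicator A x * gauss \<sigma> (y - x) \<partial>M) / (\<integral>x. gauss \<sigma> (y - x) \<partial>M)"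

definition gfun :: "(real ^ ('n::{finite,linorder})) measure \<Rightarrow> real \<Rightarrow> real ^ ('n::{finite,linorder}) \<Rightarrow> real" where
  "gfun M \<sigma> y = post_prob M \<sigma> ascending y * (1 - post_prob M \<sigma> ascending y)"

text \<open>Joint expectation E[f(X,Y)] where X ~ M and Y | X = x ~ N(x, sigma^2 I).\<close>
definition joint_exp :: "(real ^ ('n::finite)) measure \<Rightarrow> real \<Rightarrow> (real ^ 'n \<Rightarrow> real ^ 'n \<Rightarrow> real) \<Rightarrow> real" where
  "joint_exp M \<sigma> f = (\<integral>x. (\<integral>y. f x y * gauss \<sigma> (y - x) \<partial>lborel) \<partial>M)"

definition Delta_up :: "(real ^ ('n::{finite,linorder})) measure \<Rightarrow> real \<Rightarrow> real" where
  "Delta_up M \<sigma> =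
     (\<Sum>p\<in>{p. p permutes (UNIV :: 'n set)}.
        joint_exp M \<sigma> (\<lambda>x y. indicator ascending y * (norm x)\<^sup>2 * gfun M \<sigma> (perm_vec p y))
        / joint_exp M \<sigma> (\<lambda>x y. indicator ascending y))"

end

theory Submission
  imports Defs
begin

text \<open>Realise the observation as \<open>Y = X + \<sigma> Z\<close> with \<open>Z\<close> standard normal and independent of \<open>X\<close>,
  and let \<open>q\<^sub>\<pi>(y)\<close> be the posterior probability that \<open>P\<^sub>\<pi> X\<close> is ascending, so that
  \<open>g(P\<^sub>\<pi> y) = q\<^sub>\<pi>(y) (1 - q\<^sub>\<pi>(y)) \<le> |q\<^sub>\<pi>(y) - 1[P\<^sub>\<pi> X ascending]|\<close> by exchangeability.

  As \<open>\<sigma> \<rightarrow> 0\<close>: \<open>q\<^sub>\<pi>(Y)\<close> is the \<open>L\<^sup>2\<close> projection of \<open>1[P\<^sub>\<pi> Y ascending]\<close> onto functions of \<open>Y\<close>, so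
  its \<open>L\<^sup>2\<close> distance to \<open>1[P\<^sub>\<pi> X ascending]\<close> is at most that of \<open>1[P\<^sub>\<pi> Y ascending]\<close>, which tends
  to \<open>0\<close> because \<open>X\<close> has almost surely distinct entries. Since \<open>\<parallel>X\<parallel>\<^sup>2\<close> is integrable, every
  numerator of \<open>\<Delta>\<^sub>u\<^sub>p\<close> vanishes, while the denominator \<open>P[Y ascending]\<close> tends to \<open>P[X ascending] = 1/n!\<close>.

  As \<open>\<sigma> \<rightarrow> \<infinity>\<close>: the likelihood flattens, so \<open>q\<^sub>\<pi>\<close> tends to the prior value \<open>1/n!\<close>, and
  \<open>1[Y ascending] = 1[X/\<sigma> + Z ascending]\<close> tends to \<open>1[Z ascending]\<close>, which is independent of \<open>X\<close>.
  Each of the \<open>n!\<close> summands therefore tends to \<open>E\<parallel>X\<parallel>\<^sup>2 (1/n!) (1 - 1/n!)\<close>.\<close>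

section \<open>Sorting permutations\<close>

definition rank_of :: "('a::finite \<Rightarrow> 'b::linorder) \<Rightarrow> 'a \<Rightarrow> nat" where
  "rank_of f i = card {j. f j < f i}"

lemma rank_of_mono: "f i \<le> f k \<Longrightarrow> rank_of f i \<le> rank_of f k"
  unfolding rank_of_def by (intro card_mono) auto

lemma rank_of_less: "f i < f k \<Longrightarrow> rank_of f i < rank_of f k"
  unfolding rank_of_def by (intro psubset_card_mono) auto

lemma rank_of_less_card: "rank_of f i < CARD('a)" for f :: "'a::finite \<Rightarrow> 'b::linorder"
  unfolding rank_of_def by (intro psubset_card_mono) auto

lemma inj_rank_of:
  assumes "inj f"
  shows "inj (rank_of f)"
proof (rule injI)
  fix i k
  assume "rank_of f i = rank_of f k"
  then have "f i = f k"
    using rank_of_less[of f i k] rank_of_less[of f k i] by (metis less_irrefl linorder_neqE)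
  with assms show "i = k"
    by (rule injD)
qed

lemma range_rank_of:
  fixes f :: "'a::finite \<Rightarrow> 'b::linorder"
  assumes "inj f"
  shows "range (rank_of f) = {..<CARD('a)}"
  using rank_of_less_card card_image[OF inj_rank_of[OF assms]]
  by (intro card_subset_eq) auto

lemma rank_of_sorted:
  fixes f :: "'a::{finite,linorder} \<Rightarrow> 'b::linorder"
  assumes "inj f" and r: "r permutes UNIV" "mono (\<lambda>i. f (r i))"
  shows "rank_of f (r k) = rank_of (id :: 'a \<Rightarrow> 'a) k"
proof -
  have "strict_mono (\<lambda>i. f (r i))"
    using assms by (simp add: strict_mono_iff_mono inj_compose[unfolded comp_def] permutes_inj)
  then have "f (r j) < f (r k) \<longleftrightarrow> j < k" for j
    using strict_mono_less by fastforce
  then have "{j. f j < f (r k)} = r ` {j. j < k}"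
    using surj_image_vimage_eq[OF permutes_surj[OF r(1)], of "{j. f j < f (r k)}"]
    by (simp add: vimage_def)
  then show ?thesis
    using permutes_inj[OF r(1)] by (simp add: rank_of_def card_image inj_on_subset)
qed

lemma ex1_sorting_permutation:
  fixes f :: "'a::{finite,linorder} \<Rightarrow> 'b::linorder"
  assumes "inj f"
  shows "\<exists>!p. p permutes UNIV \<and> mono (\<lambda>i. f (p i))"
proof (rule ex_ex1I)
  define p where "p k = inv_into UNIV (rank_of f) (rank_of (id :: 'a \<Rightarrow> 'a) k)" for k
  have rank_p: "rank_of f (p k) = rank_of (id :: 'a \<Rightarrow> 'a) k" for k
    unfolding p_def using range_rank_of[OF assms] rank_of_less_card[of "id :: 'a \<Rightarrow> 'a"] by (intro f_inv_into_f) auto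
  have "inj p"
    using inj_rank_of[of "id :: 'a \<Rightarrow> 'a"] by (intro injI) (metis injD inj_on_id rank_p)
  then have "p permutes UNIV"
    using finite_UNIV_inj_surj[of p] by (intro bij_imp_permutes) (auto simp: bij_def)
  moreover have "mono (\<lambda>i. f (p i))"
  proof (intro monoI leI notI)
    fix i j :: 'a
    assume "i \<le> j" "f (p j) < f (p i)"
    then show False
      using rank_of_less[of f "p j" "p i"] rank_of_mono[of id i j] by (simp add: rank_p)
  qed
  ultimately show "\<exists>p. p permutes UNIV \<and> mono (\<lambda>i. f (p i))"
    by blast
next
  fix p q
  assume "p permutes UNIV \<and> mono (\<lambda>i. f (p i))" "q permutes UNIV \<and> mono (\<lambda>i. f (q i))"
  then have "rank_of f (p k) = rank_of f (q k)" for k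
    using rank_of_sorted[OF assms] by metis
  then show "p = q"
    using inj_rank_of[OF assms] by (auto dest: injD)
qed

section \<open>The cone of ascending vectors\<close>

lemma perm_vec_nth[simp]: "perm_vec p x $ i = x $ p i"
  by (simp add: perm_vec_def)

lemma perm_vec_id[simp]: "perm_vec id x = x"
  by (simp add: vec_eq_iff)

lemma perm_vec_diff: "perm_vec p (x - y) = perm_vec p x - perm_vec p y"
  by (simp add: vec_eq_iff)

lemma perm_vec_scaleR: "perm_vec p (c *\<^sub>R x) = c *\<^sub>R perm_vec p x"
  by (simp add: vec_eq_iff)

lemma tendsto_perm_vec: "(f \<longlongrightarrow> l) F \<Longrightarrow> ((\<lambda>t. perm_vec p (f t)) \<longlongrightarrow> perm_vec p l) F"
  unfolding perm_vec_def by (intro tendsto_vec_lambda tendsto_vec_nth)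

lemma perm_vec_measurable[measurable]: "perm_vec p \<in> borel_measurable borel"
  unfolding perm_vec_def
  by (intro borel_measurable_continuous_onI continuous_on_vec_lambda linear_continuous_on
      bounded_linear_vec_nth)

lemma perm_vec_in_ascending_iff: "perm_vec p x \<in> ascending \<longleftrightarrow> mono (\<lambda>i. x $ p i)"
  by (simp add: ascending_def mono_def)

lemma ascending_scaleR: "0 < c \<Longrightarrow> c *\<^sub>R x \<in> ascending \<longleftrightarrow> x \<in> ascending"
  by (simp add: ascending_def)

lemma closed_ascending: "closed (ascending :: (real ^ ('n::{finite,linorder})) set)"
proof -
  have eq: "ascending = (\<Inter>i. \<Inter>j\<in>{j. i \<le> j}. {x :: (real, 'n) vec. x $ i \<le> x $ j})"
    by (auto simp: ascending_def)
  have "closed {x :: (real, 'n) vec. x $ i \<le> x $ j}" for i j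
    by (intro closed_Collect_le linear_continuous_on bounded_linear_vec_nth)
  then show ?thesis
    unfolding eq by (intro closed_INT ballI)
qed

lemma ascending_borel[measurable, simp]: "ascending \<in> sets borel"
  using closed_ascending by (rule borel_closed)

lemma perm_vec_vimage_ascending_borel[measurable]: "perm_vec p -` ascending \<in> sets borel"
  using measurable_sets[OF perm_vec_measurable ascending_borel, of p] by simp

lemma pred_inj_nth[measurable]: "Measurable.pred borel (\<lambda>x :: real ^ 'n::finite. inj (\<lambda>i. x $ i))"
proof -
  have "{x :: real ^ 'n. inj (\<lambda>i. x $ i)} = (\<Inter>i. \<Inter>j\<in>{j. j \<noteq> i}. {x. x $ i \<noteq> x $ j})"
    by (auto simp: inj_def)
  moreover have "open {x :: real ^ 'n. x $ i \<noteq> x $ j}" for i j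
    by (intro open_Collect_neq linear_continuous_on bounded_linear_vec_nth)
  ultimately have "open {x :: real ^ 'n. inj (\<lambda>i. x $ i)}"
    by (simp only:) (intro open_INT ballI finite; assumption)
  then show ?thesis
    by (simp add: pred_def borel_open)
qed

lemma sum_indicator_perm_ascending:
  fixes x :: "real ^ ('n::{finite,linorder})"
  assumes "inj (\<lambda>i. x $ i)"
  shows "(\<Sum>p\<in>{p. p permutes (UNIV :: 'n set)}. indicator ascending (perm_vec p x) :: real) = 1"
proof -
  obtain p0 where p0: "p0 permutes UNIV" "mono (\<lambda>i. x $ p0 i)"
    and unique: "\<And>p. p permutes UNIV \<Longrightarrow> mono (\<lambda>i. x $ p i) \<Longrightarrow> p = p0"
    using ex1_sorting_permutation[OF assms] by metis
  have "perm_vec p x \<in> ascending \<longleftrightarrow> p = p0" if "p permutes UNIV" for p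
    using p0 unique[OF that] by (metis perm_vec_in_ascending_iff)
  then have "(\<Sum>p\<in>{p. p permutes (UNIV :: 'n set)}. indicator ascending (perm_vec p x) :: real)
      = (\<Sum>p\<in>{p. p permutes (UNIV :: 'n set)}. if p = p0 then 1 else 0)"
    by (intro sum.cong refl) (simp add: indicator_def)
  also have "\<dots> = 1"
    using p0(1) by (simp add: finite_permutations)
  finally show ?thesis .
qed

lemma tendsto_indicator_ascending:
  fixes x :: "real ^ ('n::{finite,linorder})"
  assumes "inj (\<lambda>i. x $ i)" and Y: "(Y \<longlongrightarrow> x) F"
  shows "((\<lambda>t. indicator ascending (Y t) :: real) \<longlongrightarrow> indicator ascending x) F"
proof -
  have "eventually (\<lambda>t. Y t $ i \<le> Y t $ j \<longleftrightarrow> x $ i \<le> x $ j) F" for i j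
  proof -
    have lim: "((\<lambda>t. Y t $ j - Y t $ i) \<longlongrightarrow> x $ j - x $ i) F"
      by (intro tendsto_intros tendsto_vec_nth Y)
    consider "x $ i < x $ j" | "x $ j < x $ i" | "i = j"
      using assms(1) by (metis injD linorder_neqE_linordered_idom)
    then show ?thesis
    proof cases
      case 1
      with order_tendstoD(1)[OF lim, of 0] show ?thesis
        by (auto elim: eventually_mono)
    next
      case 2
      with order_tendstoD(2)[OF lim, of 0] show ?thesis
        by (auto elim: eventually_mono)
    qed simp
  qed
  then have "eventually (\<lambda>t. \<forall>i j. Y t $ i \<le> Y t $ j \<longleftrightarrow> x $ i \<le> x $ j) F"
    by (intro eventually_all_finite) assumption
  then have "eventually (\<lambda>t. indicator ascending (Y t) = (indicator ascending x :: real)) F"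
    by eventually_elim (simp add: ascending_def indicator_def)
  then show ?thesis
    by (rule tendsto_eventually)
qed

section \<open>The Gaussian density\<close>

lemma gauss_nonneg: "0 \<le> gauss \<sigma> v"
  unfolding gauss_def by (intro prod_nonneg normal_density_nonneg)

lemma gauss_pos: "0 < \<sigma> \<Longrightarrow> 0 < gauss \<sigma> v"
  unfolding gauss_def by (intro prod_pos normal_density_pos) auto

lemma gauss_measurable[measurable]: "gauss \<sigma> \<in> borel_measurable borel"
  unfolding gauss_def by measurable

lemma normal_density_le: "normal_density 0 \<sigma> a \<le> 1 / sqrt (2 * pi * \<sigma>\<^sup>2)"
  unfolding normal_density_def by (intro mult_left_le) auto

lemma gauss_le: "gauss \<sigma> (v :: real ^ 'n::finite) \<le> (1 / sqrt (2 * pi * \<sigma>\<^sup>2)) ^ CARD('n)"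
  using prod_mono[of UNIV "\<lambda>i. normal_density 0 \<sigma> (v $ i)" "\<lambda>_. 1 / sqrt (2 * pi * \<sigma>\<^sup>2)"]
  by (simp add: gauss_def normal_density_le)

lemma gauss_perm_vec: "p permutes UNIV \<Longrightarrow> gauss \<sigma> (perm_vec p v) = gauss \<sigma> v"
  unfolding gauss_def perm_vec_nth
  by (rule prod.permute[symmetric, where g="\<lambda>i. normal_density 0 \<sigma> (v $ i)", simplified comp_def])

lemma normal_density_diff:
  "normal_density 0 \<sigma> (a - b) = normal_density 0 \<sigma> a * exp ((a * b - b\<^sup>2 / 2) / \<sigma>\<^sup>2)"
proof (cases "\<sigma> = 0")
  case False
  then have "-(a - b)\<^sup>2 / (2 * \<sigma>\<^sup>2) = -a\<^sup>2 / (2 * \<sigma>\<^sup>2) + (a * b - b\<^sup>2 / 2) / \<sigma>\<^sup>2"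
    by (simp add: field_simps power2_eq_square)
  then show ?thesis
    unfolding normal_density_def diff_zero by (simp only: exp_add mult.assoc)
qed (simp add: normal_density_def)

lemma gauss_diff:
  "gauss \<sigma> (w - x) = gauss \<sigma> w * exp ((w \<bullet> x - (norm x)\<^sup>2 / 2) / \<sigma>\<^sup>2)"
proof -
  have "(norm x)\<^sup>2 = (\<Sum>i\<in>UNIV. (x $ i)\<^sup>2)"
    unfolding power2_norm_eq_inner inner_vec_def by (simp add: power2_eq_square)
  then have "(w \<bullet> x - (norm x)\<^sup>2 / 2) / \<sigma>\<^sup>2 = (\<Sum>i\<in>UNIV. (w $ i * x $ i - (x $ i)\<^sup>2 / 2) / \<sigma>\<^sup>2)"
    by (simp add: inner_vec_def diff_divide_distrib sum_subtractf sum_divide_distrib[symmetric])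
  then show ?thesis
    by (simp add: gauss_def normal_density_diff exp_sum prod.distrib)
qed

lemma gauss_scaleR:
  assumes "0 < \<sigma>"
  shows "\<sigma> ^ CARD('n) * gauss \<sigma> (\<sigma> *\<^sub>R z) = gauss 1 (z :: real ^ 'n::finite)"
proof -
  have "\<sigma> * normal_density 0 \<sigma> (\<sigma> * a) = normal_density 0 1 a" for a
    using assms by (simp add: normal_density_def real_sqrt_mult power_mult_distrib field_simps)
  then show ?thesis
    by (simp add: gauss_def prod.distrib[symmetric] flip: prod_constant)
qed

lemma nn_integral_gauss:
  assumes "0 < \<sigma>"
  shows "(\<integral>\<^sup>+y. ennreal (gauss \<sigma> (y - x :: real ^ 'n::finite)) \<partial>lborel) = 1"
proof -
  have inj: "inj (\<lambda>i::'n. axis i (1::real))"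
    by (auto intro!: injI simp: axis_eq_axis)
  have Basis: "(Basis :: (real ^ 'n) set) = (\<lambda>i. axis i 1) ` UNIV"
    by (auto simp: Basis_vec_def)
  have "gauss \<sigma> v = (\<Prod>b\<in>Basis. normal_density 0 \<sigma> (v \<bullet> b))" for v :: "real ^ 'n"
    by (simp add: Basis gauss_def prod.reindex[OF inj] inner_axis)
  then have "(\<integral>\<^sup>+v. ennreal (gauss \<sigma> (v :: real ^ 'n)) \<partial>lborel)
      = (\<integral>\<^sup>+v. (\<Prod>b\<in>Basis. ennreal (normal_density 0 \<sigma> (v \<bullet> b))) \<partial>(lborel :: (real ^ 'n) measure))"
    by (simp add: prod_ennreal)
  also have "\<dots> = (\<Prod>b\<in>(Basis :: (real ^ 'n) set). \<integral>\<^sup>+a. ennreal (normal_density 0 \<sigma> a) \<partial>lborel)"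
    by (rule nn_integral_lborel_prod) auto
  also have "(\<integral>\<^sup>+a. ennreal (normal_density 0 \<sigma> a) \<partial>lborel) = 1"
  proof -
    interpret prob_space "density lborel (normal_density 0 \<sigma>)"
      using prob_space_normal_density assms by blast
    show ?thesis
      using emeasure_space_1 by (simp add: emeasure_density)
  qed
  finally have "(\<integral>\<^sup>+v. ennreal (gauss \<sigma> (v :: real ^ 'n)) \<partial>lborel) = 1"
    by simp
  moreover have "(\<integral>\<^sup>+y. ennreal (gauss \<sigma> (y - x)) \<partial>lborel)
      = (\<integral>\<^sup>+y. ennreal (gauss \<sigma> (y - x)) \<partial>distr lborel borel ((+) x))"
    by (simp add: lborel_distr_plus)
  ultimately show ?thesis
    by (simp add: nn_integral_distr)
qed

definition std_normal :: "(real ^ 'n::finite) measure" where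
  "std_normal = density lborel (\<lambda>z. ennreal (gauss 1 z))"

lemma prob_space_std_normal: "prob_space std_normal"
  unfolding std_normal_def
  using nn_integral_gauss[of 1 0] by (intro prob_spaceI) (simp add: emeasure_density)

lemma sets_std_normal[simp, measurable_cong]: "sets std_normal = sets borel"
  by (simp add: std_normal_def)

lemma integral_gauss_eq_std_normal:
  fixes f :: "real ^ 'n::finite \<Rightarrow> real"
  assumes \<sigma>: "0 < \<sigma>" and [measurable]: "f \<in> borel_measurable borel"
  shows "(\<integral>y. f y * gauss \<sigma> (y - x) \<partial>lborel) = (\<integral>z. f (x + \<sigma> *\<^sub>R z) \<partial>std_normal)"
proof -
  have "(\<integral>y. f y * gauss \<sigma> (y - x) \<partial>lborel)
      = (\<integral>y. f y * gauss \<sigma> (y - x) \<partial>density (distr lborel borel (\<lambda>z. x + \<sigma> *\<^sub>R z))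
           (\<lambda>_. \<bar>\<sigma>\<bar> ^ DIM(real ^ 'n)))"
    using lborel_affine[of \<sigma> x] \<sigma> by simp
  also have "\<dots> = (\<integral>z. \<sigma> ^ CARD('n) * gauss \<sigma> (\<sigma> *\<^sub>R z) * f (x + \<sigma> *\<^sub>R z) \<partial>lborel)"
    using \<sigma> by (simp add: integral_density integral_distr mult_ac)
  also have "\<dots> = (\<integral>z. f (x + \<sigma> *\<^sub>R z) \<partial>std_normal)"
    unfolding gauss_scaleR[OF \<sigma>] std_normal_def
    by (simp add: integral_density gauss_nonneg)
  finally show ?thesis .
qed

lemma AE_lborel_nth_neq:
  assumes "i \<noteq> j"
  shows "AE z in (lborel :: (real ^ 'n::finite) measure). z $ i \<noteq> z $ j"
proof -
  define a :: "real ^ 'n" where "a = axis i 1 - axis j 1"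
  have "a \<noteq> 0"
    using assms unfolding a_def by (metis axis_eq_axis right_minus_eq zero_neq_one)
  moreover have "{z :: real ^ 'n. z $ i = z $ j} = {z. a \<bullet> z = 0}"
    by (auto simp: a_def inner_diff_left inner_commute[of "axis _ _"] inner_axis)
  ultimately have "negligible {z :: real ^ 'n. z $ i = z $ j}"
    by (simp add: negligible_hyperplane)
  moreover have "closed {z :: real ^ 'n. z $ i = z $ j}"
    by (intro closed_Collect_eq linear_continuous_on bounded_linear_vec_nth)
  ultimately have "{z :: real ^ 'n. z $ i = z $ j} \<in> null_sets lborel"
    by (auto simp: negligible_iff_null_sets null_sets_completion_iff borel_closed)
  from AE_not_in[OF this] show ?thesis
    by simp
qed

lemma AE_std_normal_inj: "AE z in (std_normal :: (real ^ 'n::finite) measure). inj (\<lambda>i. z $ i)"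
proof -
  have "AE z in (lborel :: (real ^ 'n) measure). \<forall>i\<in>UNIV. \<forall>j\<in>UNIV. i \<noteq> j \<longrightarrow> z $ i \<noteq> z $ j"
    by (simp only: AE_finite_all[OF finite_class.finite_UNIV]) (simp add: AE_lborel_nth_neq)
  then have "AE z in (lborel :: (real ^ 'n) measure). inj (\<lambda>i. z $ i)"
    by eventually_elim (auto simp: inj_def)
  then show ?thesis
    unfolding std_normal_def by (subst AE_density) (auto elim: AE_mp)
qed

lemma std_normal_cbox_pos:
  assumes "\<And>i. l $ i < u $ i"
  shows "0 < measure (std_normal :: (real ^ 'n::finite) measure) (cbox l u)"
proof -
  interpret N: prob_space "std_normal :: (real ^ 'n) measure"
    by (rule prob_space_std_normal)
  have "emeasure lborel (cbox l u) = ennreal (\<Prod>b\<in>Basis. (u - l) \<bullet> b)"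
    using assms
    by (subst emeasure_lborel_cbox)
       (auto simp: Basis_vec_def inner_axis cart_eq_inner_axis[symmetric] less_imp_le)
  moreover have "0 < (\<Prod>b\<in>(Basis :: (real ^ 'n) set). (u - l) \<bullet> b)"
    using assms by (intro prod_pos) (auto simp: Basis_vec_def inner_axis)
  ultimately have "cbox l u \<notin> null_sets lborel"
    by (metis ennreal_eq_0_iff not_le null_setsD1)
  have "\<not> (AE z in lborel. z \<in> cbox l u \<longrightarrow> ennreal (gauss 1 z) = 0)"
  proof
    assume "AE z in lborel. z \<in> cbox l u \<longrightarrow> ennreal (gauss 1 z) = 0"
    then have "AE z in lborel. z \<notin> cbox l u"
      by eventually_elim (metis gauss_pos ennreal_eq_0_iff not_le zero_less_one)
    with \<open>cbox l u \<notin> null_sets lborel\<close> show False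
      by (simp add: AE_iff_null_sets)
  qed
  then have "cbox l u \<notin> null_sets std_normal"
    unfolding std_normal_def by (subst null_sets_density_iff) auto
  then show ?thesis
    by (auto simp: N.emeasure_eq_measure zero_less_measure_iff null_sets_def)
qed

lemma std_normal_ascending_pos:
  "0 < measure (std_normal :: (real ^ ('n::{finite,linorder})) measure) ascending"
proof -
  interpret N: prob_space "std_normal :: ((real, 'n) vec) measure"
    by (rule prob_space_std_normal)
  define l :: "(real, 'n) vec" where "l = (\<chi> i. real (rank_of (id :: 'n \<Rightarrow> 'n) i))"
  have "cbox l (l + (\<chi> i. 1 / 2)) \<subseteq> ascending"
  proof
    fix z
    assume "z \<in> cbox l (l + (\<chi> i. 1 / 2))"
    then have z: "l $ i \<le> z $ i" "z $ i \<le> l $ i + 1 / 2" for i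
      by (auto simp: mem_box_cart)
    have "z $ i \<le> z $ j" if "i < j" for i j
    proof -
      have "rank_of (id :: 'n \<Rightarrow> 'n) i < rank_of (id :: 'n \<Rightarrow> 'n) j"
        using that by (intro rank_of_less) simp
      then have "l $ i + 1 \<le> l $ j"
        by (simp add: l_def)
      then show ?thesis
        using z[of i] z[of j] by simp
    qed
    then show "z \<in> ascending"
      by (auto simp: ascending_def order_le_less)
  qed
  moreover have "0 < measure std_normal (cbox l (l + (\<chi> i. 1 / 2)))"
    by (rule std_normal_cbox_pos) simp
  ultimately show ?thesis
    using N.finite_measure_mono[of "cbox l (l + (\<chi> i. 1 / 2))" ascending] by simp
qed

section \<open>An \<open>L\<^sup>1\<close> bound for vanishing bounded perturbations\<close>

lemma abs_le_plus_square_div: "0 < \<delta> \<Longrightarrow> \<bar>d\<bar> \<le> \<delta> + d\<^sup>2 / \<delta>" for d \<delta> :: real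
proof (cases "\<bar>d\<bar> \<le> \<delta>")
  case False
  assume "0 < \<delta>"
  then have "\<bar>d\<bar> * \<delta> \<le> \<bar>d\<bar> * \<bar>d\<bar>"
    using False by (intro mult_left_mono) auto
  with \<open>0 < \<delta>\<close> show ?thesis
    by (simp add: field_simps power2_eq_square abs_mult_self_eq add_increasing)
qed (simp add: add_increasing2)

lemma mult_abs_le_truncation:
  fixes W d K \<delta> :: real
  assumes "0 \<le> W" "\<bar>d\<bar> \<le> 1" "0 \<le> K" "0 < \<delta>"
  shows "W * \<bar>d\<bar> \<le> W * indicator {K<..} W + K * \<delta> + K / \<delta> * d\<^sup>2"
proof (cases "K < W")
  case True
  have "W * \<bar>d\<bar> \<le> W"
    using assms by (intro mult_left_le) auto
  moreover have "0 \<le> K * \<delta> + K / \<delta> * d\<^sup>2"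
    using assms by simp
  ultimately show ?thesis
    using True by simp
next
  case False
  have "W * \<bar>d\<bar> \<le> K * \<bar>d\<bar>"
    using False assms by (intro mult_right_mono) auto
  also have "\<dots> \<le> K * (\<delta> + d\<^sup>2 / \<delta>)"
    using abs_le_plus_square_div[OF assms(4)] assms by (intro mult_left_mono) auto
  finally show ?thesis
    using False by (simp add: algebra_simps)
qed

lemma tendsto_integral_upper_tail:
  fixes W :: "'a \<Rightarrow> real"
  assumes "integrable M W"
  shows "(\<lambda>k::nat. \<integral>\<omega>. W \<omega> * indicator {real k<..} (W \<omega>) \<partial>M) \<longlonglongrightarrow> 0"
proof -
  have [measurable]: "W \<in> borel_measurable M"
    using assms by simp
  have "AE \<omega> in M. (\<lambda>k::nat. W \<omega> * indicator {real k<..} (W \<omega>)) \<longlonglongrightarrow> 0"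
  proof (intro AE_I2 tendsto_eventually)
    fix \<omega>
    obtain N :: nat where "W \<omega> < real N"
      using reals_Archimedean2 by blast
    then show "eventually (\<lambda>k. W \<omega> * indicator {real k<..} (W \<omega>) = 0) sequentially"
      by (auto simp: eventually_sequentially indicator_def intro!: exI[of _ N])
  qed
  then have "(\<lambda>k::nat. \<integral>\<omega>. W \<omega> * indicator {real k<..} (W \<omega>) \<partial>M) \<longlonglongrightarrow> (\<integral>\<omega>. 0 \<partial>M)"
    using assms
    by (intro integral_dominated_convergence[where w="\<lambda>\<omega>. \<bar>W \<omega>\<bar>"])
       (auto simp: indicator_def)
  then show ?thesis
    by simp
qed

lemma (in prob_space) integral_mult_abs_le_truncation:
  fixes W :: "'a \<Rightarrow> real" and d :: "'a \<Rightarrow> real"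
  assumes W: "integrable M W" "\<And>\<omega>. 0 \<le> W \<omega>"
    and [measurable]: "d \<in> borel_measurable M" and d: "\<And>\<omega>. \<bar>d \<omega>\<bar> \<le> 1"
    and "0 \<le> K" "0 < \<delta>"
  shows "(\<integral>\<omega>. W \<omega> * \<bar>d \<omega>\<bar> \<partial>M)
    \<le> (\<integral>\<omega>. W \<omega> * indicator {K<..} (W \<omega>) \<partial>M) + K * \<delta> + K / \<delta> * (\<integral>\<omega>. (d \<omega>)\<^sup>2 \<partial>M)"
proof -
  have [measurable]: "W \<in> borel_measurable M"
    using W by simp
  have tail: "integrable M (\<lambda>\<omega>. W \<omega> * indicator {K<..} (W \<omega>))"
    by (rule Bochner_Integration.integrable_bound[OF W(1)]) (auto simp: W(2) indicator_def)
  have square: "integrable M (\<lambda>\<omega>. (d \<omega>)\<^sup>2)"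
    by (rule integrable_const_bound[where B=1]) (auto simp: abs_square_le_1 d)
  have "integrable M (\<lambda>\<omega>. W \<omega> * \<bar>d \<omega>\<bar>)"
    by (rule Bochner_Integration.integrable_bound[OF W(1)]) (auto simp: abs_mult W(2) d mult_left_le)
  moreover have "integrable M (\<lambda>\<omega>. W \<omega> * indicator {K<..} (W \<omega>) + K * \<delta> + K / \<delta> * (d \<omega>)\<^sup>2)"
    using tail square by simp
  ultimately have "(\<integral>\<omega>. W \<omega> * \<bar>d \<omega>\<bar> \<partial>M)
      \<le> (\<integral>\<omega>. W \<omega> * indicator {K<..} (W \<omega>) + K * \<delta> + K / \<delta> * (d \<omega>)\<^sup>2 \<partial>M)"
    by (rule integral_mono) (intro mult_abs_le_truncation W(2) d assms(5,6))
  also have "\<dots> = (\<integral>\<omega>. W \<omega> * indicator {K<..} (W \<omega>) \<partial>M) + K * \<delta> + K / \<delta> * (\<integral>\<omega>. (d \<omega>)\<^sup>2 \<partial>M)"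
    using tail square by (simp add: prob_space)
  finally show ?thesis .
qed

text \<open>A weight that is only integrable is split into a bounded part, handled by
  \<open>\<bar>d\<bar> \<le> \<delta> + d\<^sup>2 / \<delta>\<close>, and a small tail.\<close>

lemma (in prob_space) tendsto_integral_mult_abs_zero:
  fixes W :: "'a \<Rightarrow> real" and d :: "'b \<Rightarrow> 'a \<Rightarrow> real"
  assumes W: "integrable M W" "\<And>\<omega>. 0 \<le> W \<omega>"
    and d: "\<And>t. d t \<in> borel_measurable M" "\<And>t \<omega>. \<bar>d t \<omega>\<bar> \<le> 1"
    and d_L2: "((\<lambda>t. \<integral>\<omega>. (d t \<omega>)\<^sup>2 \<partial>M) \<longlongrightarrow> 0) F"
  shows "((\<lambda>t. \<integral>\<omega>. W \<omega> * \<bar>d t \<omega>\<bar> \<partial>M) \<longlongrightarrow> 0) F"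
proof (rule order_tendstoI)
  fix a :: real
  assume "a < 0"
  then show "eventually (\<lambda>t. a < (\<integral>\<omega>. W \<omega> * \<bar>d t \<omega>\<bar> \<partial>M)) F"
    by (intro always_eventually allI, rule less_le_trans[of _ 0]) (auto intro!: Bochner_Integration.integral_nonneg simp: W(2))
next
  fix a :: real
  assume "0 < a"
  then obtain K :: nat where K: "(\<integral>\<omega>. W \<omega> * indicator {real K<..} (W \<omega>) \<partial>M) < a / 3"
    using order_tendstoD(2)[OF tendsto_integral_upper_tail[OF W(1)], of "a / 3"]
    by (auto simp: eventually_sequentially)
  define \<delta> where "\<delta> = a / (3 * (real K + 1))"
  have "0 < \<delta>" "real K * \<delta> \<le> a / 3"
    using \<open>0 < a\<close> by (auto simp: \<delta>_def field_simps)
  have "eventually (\<lambda>t. (\<integral>\<omega>. (d t \<omega>)\<^sup>2 \<partial>M) < \<delta> * \<delta>) F"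
    using \<open>0 < \<delta>\<close> by (intro order_tendstoD(2)[OF d_L2]) simp
  then show "eventually (\<lambda>t. (\<integral>\<omega>. W \<omega> * \<bar>d t \<omega>\<bar> \<partial>M) < a) F"
  proof eventually_elim
    case (elim t)
    have "real K / \<delta> * (\<integral>\<omega>. (d t \<omega>)\<^sup>2 \<partial>M) \<le> real K / \<delta> * (\<delta> * \<delta>)"
      using elim \<open>0 < \<delta>\<close> by (intro mult_left_mono) auto
    also have "\<dots> = real K * \<delta>"
      using \<open>0 < \<delta>\<close> by simp
    finally show ?case
      using integral_mult_abs_le_truncation[OF W d(1)[of t] d(2)[of t] of_nat_0_le_iff[of K] \<open>0 < \<delta>\<close>] K
        \<open>real K * \<delta> \<le> a / 3\<close>
      by linarith
  qed
qed

section \<open>Observations with Gaussian noise\<close>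

lemma exp_inner_mult_le:
  fixes v x :: "'a::real_inner"
  assumes "norm v \<le> r"
  shows "exp (v \<bullet> x * s - (norm x)\<^sup>2 / 2 * s\<^sup>2) \<le> exp (r\<^sup>2 / 2)"
proof -
  have "0 \<le> (norm (v - s *\<^sub>R x))\<^sup>2"
    by simp
  also have "\<dots> = (norm v)\<^sup>2 - 2 * s * (v \<bullet> x) + s\<^sup>2 * (norm x)\<^sup>2"
    unfolding power2_norm_eq_inner
    by (simp add: inner_diff_left inner_diff_right inner_commute[of x v] power2_eq_square
        algebra_simps)
  finally have "v \<bullet> x * s - (norm x)\<^sup>2 / 2 * s\<^sup>2 \<le> (norm v)\<^sup>2 / 2"
    by (simp add: power2_eq_square algebra_simps)
  moreover have "(norm v)\<^sup>2 \<le> r\<^sup>2"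
    using assms by (intro power_mono) auto
  ultimately show ?thesis
    by simp
qed

lemma gauss_diff_eq_mult_exp:
  "gauss t (w - x)
    = exp ((inverse t *\<^sub>R w) \<bullet> x * inverse t - (norm x)\<^sup>2 / 2 * (inverse t)\<^sup>2) * gauss t w"
proof -
  have "(w \<bullet> x - (norm x)\<^sup>2 / 2) / t\<^sup>2
      = (inverse t *\<^sub>R w) \<bullet> x * inverse t - (norm x)\<^sup>2 / 2 * (inverse t)\<^sup>2"
    by (cases "t = 0") (simp_all add: field_simps power2_eq_square)
  then show ?thesis
    by (simp add: gauss_diff mult.commute)
qed

locale gaussian_noise = prob_space M for M :: "(real ^ 'n::finite) measure" +
  assumes sets_M[measurable_cong]: "sets M = sets borel"
begin

lemma space_M[simp]: "space M = UNIV"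
  using sets_eq_imp_space_eq[OF sets_M] by simp

lemma integrable_indicator_gauss_diff:
  "B \<in> sets borel \<Longrightarrow> integrable M (\<lambda>x. indicator B x * gauss \<sigma> (y - x))"
  by (intro integrable_const_bound[where B="(1 / sqrt (2 * pi * \<sigma>\<^sup>2)) ^ CARD('n)"])
     (auto simp: gauss_nonneg gauss_le indicator_def)

lemma integrable_gauss_diff: "integrable M (\<lambda>x. gauss \<sigma> (y - x))"
  using integrable_indicator_gauss_diff[of UNIV] by simp

lemma integral_gauss_diff_pos:
  assumes "0 < \<sigma>"
  shows "0 < (\<integral>x. gauss \<sigma> (y - x) \<partial>M)"
proof -
  have "(\<integral>x. gauss \<sigma> (y - x) \<partial>M) \<noteq> 0"
  proof
    assume "(\<integral>x. gauss \<sigma> (y - x) \<partial>M) = 0"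
    then have "AE x in M. gauss \<sigma> (y - x) = 0"
      using integral_nonneg_eq_0_iff_AE[OF integrable_gauss_diff] by (simp add: gauss_nonneg)
    then have "AE x in M. False"
      by eventually_elim (metis assms gauss_pos less_irrefl)
    then show False
      by simp
  qed
  then show ?thesis
    by (simp add: gauss_nonneg Bochner_Integration.integral_nonneg order_less_le)
qed

lemma post_prob_nonneg: "0 \<le> post_prob M \<sigma> B y"
  unfolding post_prob_def by (intro divide_nonneg_nonneg Bochner_Integration.integral_nonneg) (auto simp: gauss_nonneg)

lemma post_prob_le_1:
  assumes [measurable]: "B \<in> sets borel"
  shows "post_prob M \<sigma> B y \<le> 1"
proof -
  have "(\<integral>x. indicator B x * gauss \<sigma> (y - x) \<partial>M) \<le> (\<integral>x. gauss \<sigma> (y - x) \<partial>M)"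
    using integrable_indicator_gauss_diff integrable_gauss_diff
    by (intro integral_mono) (auto simp: indicator_def gauss_nonneg)
  moreover have "0 \<le> (\<integral>x. gauss \<sigma> (y - x) \<partial>M)"
    by (simp add: gauss_nonneg)
  ultimately show ?thesis
    unfolding post_prob_def by (cases "(\<integral>x. gauss \<sigma> (y - x) \<partial>M) = 0") (auto simp: divide_le_eq_1)
qed

lemma post_prob_mult_integral:
  assumes "0 < \<sigma>"
  shows "post_prob M \<sigma> B y * (\<integral>x. gauss \<sigma> (y - x) \<partial>M) = (\<integral>x. indicator B x * gauss \<sigma> (y - x) \<partial>M)"
proof -
  have "(\<integral>x. gauss \<sigma> (y - x) \<partial>M) \<noteq> 0"
    using integral_gauss_diff_pos[OF assms, of y] by simp
  then show ?thesis
    by (simp add: post_prob_def)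
qed

lemma post_prob_measurable[measurable]:
  assumes [measurable]: "B \<in> sets borel"
  shows "post_prob M \<sigma> B \<in> borel_measurable borel"
proof -
  have [measurable]: "(\<lambda>y. \<integral>x. indicator B x * gauss \<sigma> (y - x) \<partial>M) \<in> borel_measurable borel"
    "(\<lambda>y. \<integral>x. gauss \<sigma> (y - x) \<partial>M) \<in> borel_measurable borel"
    by (rule borel_measurable_lebesgue_integral; simp)+
  show ?thesis
    unfolding post_prob_def[abs_def] by measurable
qed

text \<open>Conditional on \<open>X = x\<close>, the observation \<open>Y\<close> is distributed as \<open>x + \<sigma> Z\<close> with \<open>Z\<close> standard
  normal and independent of \<open>X\<close>; all joint expectations are computed on this product space.\<close>

abbreviation XZ :: "((real ^ 'n) \<times> (real ^ 'n)) measure" where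
  "XZ \<equiv> M \<Otimes>\<^sub>M std_normal"

sublocale XZ: pair_prob_space M "std_normal :: (real ^ 'n) measure"
  by (simp add: pair_prob_space_def pair_sigma_finite_def prob_space_axioms prob_space_std_normal
      prob_space_imp_sigma_finite)

lemma sets_XZ[measurable_cong]: "sets XZ = sets (borel \<Otimes>\<^sub>M borel)"
  by (intro sets_pair_measure_cong sets_M sets_std_normal)

lemma integral_XZ_fst:
  fixes g :: "real ^ 'n \<Rightarrow> real"
  assumes [measurable]: "g \<in> borel_measurable borel"
  shows "(\<integral>\<omega>. g (fst \<omega>) \<partial>XZ) = (\<integral>x. g x \<partial>M)"
proof -
  have "(\<integral>x. g x \<partial>M) = (\<integral>x. g x \<partial>distr XZ M fst)"
    by (simp add: XZ.M2.distr_pair_fst)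
  also have "\<dots> = (\<integral>\<omega>. g (fst \<omega>) \<partial>XZ)"
    by (rule integral_distr[of fst XZ M g]; measurable)
  finally show ?thesis ..
qed

lemma integrable_XZ_fst:
  fixes g :: "real ^ 'n \<Rightarrow> real"
  assumes "integrable M g"
  shows "integrable XZ (\<lambda>\<omega>. g (fst \<omega>))"
proof -
  have [measurable]: "g \<in> borel_measurable M"
    using assms by simp
  have "integrable (distr XZ M fst) g"
    using assms by (simp add: XZ.M2.distr_pair_fst)
  moreover have "integrable (distr XZ M fst) g \<longleftrightarrow> integrable XZ (\<lambda>\<omega>. g (fst \<omega>))"
    by (rule integrable_distr_eq[of fst XZ M g]; measurable)
  ultimately show ?thesis
    by simp
qed

lemma integral_XZ_mult:
  fixes f g :: "real ^ 'n \<Rightarrow> real"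
  assumes [measurable]: "f \<in> borel_measurable borel" "g \<in> borel_measurable borel"
    and "integrable XZ (\<lambda>\<omega>. f (fst \<omega>) * g (snd \<omega>))"
  shows "(\<integral>\<omega>. f (fst \<omega>) * g (snd \<omega>) \<partial>XZ) = (\<integral>x. f x \<partial>M) * (\<integral>z. g z \<partial>std_normal)"
  using XZ.integral_fst'[OF assms(3)] by simp

lemma AE_XZ_inj_snd: "AE \<omega> in XZ. inj (\<lambda>i. snd \<omega> $ i)"
proof (rule XZ.AE_pair_measure)
  show "{\<omega> \<in> space XZ. inj (\<lambda>i. snd \<omega> $ i)} \<in> sets XZ"
    by measurable
  show "AE x in M. AE z in std_normal. inj (\<lambda>i. snd (x, z) $ i)"
    by (simp add: AE_std_normal_inj)
qed

lemma joint_exp_nonneg: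
  assumes "\<And>x y. 0 \<le> f x y"
  shows "0 \<le> joint_exp M \<sigma> f"
  unfolding joint_exp_def using assms by (simp add: gauss_nonneg)

lemma joint_exp_eq_integral_XZ:
  assumes \<sigma>: "0 < \<sigma>" and [measurable]: "(\<lambda>(x, y). f x y) \<in> borel_measurable (borel \<Otimes>\<^sub>M borel)"
    and "integrable XZ (\<lambda>\<omega>. f (fst \<omega>) (fst \<omega> + \<sigma> *\<^sub>R snd \<omega>))"
  shows "joint_exp M \<sigma> f = (\<integral>\<omega>. f (fst \<omega>) (fst \<omega> + \<sigma> *\<^sub>R snd \<omega>) \<partial>XZ)"
proof -
  have "joint_exp M \<sigma> f = (\<integral>x. (\<integral>z. f x (x + \<sigma> *\<^sub>R z) \<partial>std_normal) \<partial>M)"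
    unfolding joint_exp_def by (intro Bochner_Integration.integral_cong refl integral_gauss_eq_std_normal \<sigma>) measurable
  also have "\<dots> = (\<integral>\<omega>. f (fst \<omega>) (fst \<omega> + \<sigma> *\<^sub>R snd \<omega>) \<partial>XZ)"
    using XZ.integral_fst'[OF assms(3)] by simp
  finally show ?thesis .
qed

lemma integrable_M_lborel_gauss:
  assumes "0 < \<sigma>"
  shows "integrable (M \<Otimes>\<^sub>M lborel) (\<lambda>(x, y). gauss \<sigma> (y - x))"
proof -
  have "(\<integral>\<^sup>+\<omega>. ennreal (norm (gauss \<sigma> (snd \<omega> - fst \<omega>))) \<partial>(M \<Otimes>\<^sub>M lborel))
      = (\<integral>\<^sup>+x. (\<integral>\<^sup>+y. ennreal (gauss \<sigma> (y - x)) \<partial>lborel) \<partial>M)"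
    by (subst lborel.nn_integral_fst[symmetric]) (auto simp: gauss_nonneg)
  also have "\<dots> = 1"
    using emeasure_space_1 by (simp add: nn_integral_gauss[OF assms])
  finally show ?thesis
    by (intro integrableI_bounded) (auto simp: case_prod_beta)
qed

text \<open>The posterior probability is the conditional expectation of the indicator of \<open>B\<close> given
  the observation, so the residual is orthogonal to every bounded function of the observation.\<close>

lemma joint_exp_post_prob_orthogonal:
  assumes \<sigma>: "0 < \<sigma>" and [measurable]: "B \<in> sets borel" "h \<in> borel_measurable borel"
    and h: "\<And>y. \<bar>h y\<bar> \<le> 1"
  shows "joint_exp M \<sigma> (\<lambda>x y. (post_prob M \<sigma> B y - indicator B x) * h y) = 0"
proof -
  interpret XY: pair_sigma_finite M "lborel :: (real ^ 'n) measure"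
    by (simp add: pair_sigma_finite_def prob_space_imp_sigma_finite prob_space_axioms
        sigma_finite_lborel)
  let ?f = "\<lambda>(x, y). (post_prob M \<sigma> B y - indicator B x) * h y * gauss \<sigma> (y - x)"
  have "\<bar>(post_prob M \<sigma> B y - indicator B x) * h y\<bar> \<le> 1" for x y
    using post_prob_nonneg[of \<sigma> B y] post_prob_le_1[of B \<sigma> y] h[of y]
    by (auto simp: abs_mult indicator_def intro: mult_le_one)
  then have int: "integrable (M \<Otimes>\<^sub>M lborel) ?f"
    by (intro Bochner_Integration.integrable_bound[OF integrable_M_lborel_gauss[OF \<sigma>]])
       (auto simp: abs_mult gauss_nonneg mult_left_le_one_le)
  have inner: "(\<integral>x. (post_prob M \<sigma> B y - indicator B x) * h y * gauss \<sigma> (y - x) \<partial>M) = 0" for y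
  proof -
    have "(\<lambda>x. (post_prob M \<sigma> B y - indicator B x) * h y * gauss \<sigma> (y - x))
        = (\<lambda>x. h y * post_prob M \<sigma> B y * gauss \<sigma> (y - x) - h y * (indicator B x * gauss \<sigma> (y - x)))"
      by (auto simp: fun_eq_iff algebra_simps)
    then have "(\<integral>x. (post_prob M \<sigma> B y - indicator B x) * h y * gauss \<sigma> (y - x) \<partial>M)
        = h y * (post_prob M \<sigma> B y * (\<integral>x. gauss \<sigma> (y - x) \<partial>M)
            - (\<integral>x. indicator B x * gauss \<sigma> (y - x) \<partial>M))"
      using integrable_gauss_diff[of \<sigma> y] integrable_indicator_gauss_diff[of B \<sigma> y]
      by (simp add: algebra_simps)
    then show ?thesis
      by (simp add: post_prob_mult_integral[OF \<sigma>])
  qed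
  have "joint_exp M \<sigma> (\<lambda>x y. (post_prob M \<sigma> B y - indicator B x) * h y) = integral\<^sup>L (M \<Otimes>\<^sub>M lborel) ?f"
    unfolding joint_exp_def using XY.integral_fst'[OF int] by simp
  also have "\<dots> = (\<integral>y. (\<integral>x. (post_prob M \<sigma> B y - indicator B x) * h y * gauss \<sigma> (y - x) \<partial>M) \<partial>lborel)"
    using XY.integral_snd[OF int] by simp
  also have "\<dots> = 0"
    by (simp add: inner)
  finally show ?thesis .
qed

text \<open>Pythagoras: the cross term vanishes by the orthogonality above.\<close>

lemma integral_XZ_post_prob_sq_le:
  assumes \<sigma>: "0 < \<sigma>" and [measurable]: "B \<in> sets borel"
  shows "(\<integral>\<omega>. (post_prob M \<sigma> B (fst \<omega> + \<sigma> *\<^sub>R snd \<omega>) - indicator B (fst \<omega>))\<^sup>2 \<partial>XZ)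
    \<le> (\<integral>\<omega>. (indicator B (fst \<omega> + \<sigma> *\<^sub>R snd \<omega>) - indicator B (fst \<omega>))\<^sup>2 \<partial>XZ)"
proof -
  let ?Y = "\<lambda>\<omega>. fst \<omega> + \<sigma> *\<^sub>R snd \<omega>"
  let ?q = "post_prob M \<sigma> B"
  let ?a = "\<lambda>\<omega>. ?q (?Y \<omega>) - indicator B (fst \<omega>)"
  let ?c = "\<lambda>\<omega>. indicator B (?Y \<omega>) - ?q (?Y \<omega>)"
  have q: "0 \<le> ?q y" "?q y \<le> 1" for y
    using post_prob_nonneg post_prob_le_1 by auto
  have a: "\<bar>?a \<omega>\<bar> \<le> 1" and c: "\<bar>?c \<omega>\<bar> \<le> 1" for \<omega>
    using q[of "?Y \<omega>"] by (auto simp: indicator_def)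
  have bounded: "integrable XZ f"
    if "f \<in> borel_measurable XZ" "\<And>\<omega>. \<bar>f \<omega>\<bar> \<le> 1" for f :: "_ \<Rightarrow> real"
    using that by (intro XZ.P.integrable_const_bound[where B=1] AE_I2) auto
  have int_a: "integrable XZ (\<lambda>\<omega>. (?a \<omega>)\<^sup>2)" and int_c: "integrable XZ (\<lambda>\<omega>. (?c \<omega>)\<^sup>2)"
    using a c by (auto intro!: bounded simp: abs_square_le_1)
  have int_ac: "integrable XZ (\<lambda>\<omega>. ?a \<omega> * ?c \<omega>)"
    using a c by (auto intro!: bounded mult_le_one simp: abs_mult)
  have "(\<integral>\<omega>. ?a \<omega> * ?c \<omega> \<partial>XZ) = joint_exp M \<sigma> (\<lambda>x y. (?q y - indicator B x) * (indicator B y - ?q y))"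
    using int_ac by (intro joint_exp_eq_integral_XZ[symmetric] \<sigma>) auto
  also have "\<dots> = 0"
    using q by (intro joint_exp_post_prob_orthogonal \<sigma>) (auto simp: indicator_def)
  finally have cross: "(\<integral>\<omega>. ?a \<omega> * ?c \<omega> \<partial>XZ) = 0" .
  have "(\<integral>\<omega>. (indicator B (?Y \<omega>) - indicator B (fst \<omega>))\<^sup>2 \<partial>XZ)
      = (\<integral>\<omega>. (?a \<omega>)\<^sup>2 + 2 * (?a \<omega> * ?c \<omega>) + (?c \<omega>)\<^sup>2 \<partial>XZ)"
    by (intro Bochner_Integration.integral_cong refl) (simp add: power2_eq_square algebra_simps)
  also have "\<dots> = (\<integral>\<omega>. (?a \<omega>)\<^sup>2 \<partial>XZ) + (\<integral>\<omega>. (?c \<omega>)\<^sup>2 \<partial>XZ)"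
    using int_a int_c int_ac cross by simp
  finally show ?thesis
    by (simp add: Bochner_Integration.integral_nonneg)
qed

lemma tendsto_integral_indicator_mult_exp:
  assumes u: "(u \<longlongrightarrow> w0) at_top" and [measurable]: "A \<in> sets borel"
  shows "((\<lambda>t. \<integral>x. indicator A x * exp (u t \<bullet> x * inverse t - (norm x)\<^sup>2 / 2 * (inverse t)\<^sup>2) \<partial>M)
    \<longlongrightarrow> prob A) at_top"
proof -
  define C where "C = exp ((norm w0 + 1)\<^sup>2 / 2)"
  have "eventually (\<lambda>t. norm (u t) \<le> norm w0 + 1) at_top"
    using tendstoD[OF u zero_less_one]
  proof (elim eventually_mono)
    fix t
    assume "dist (u t) w0 < 1"
    then show "norm (u t) \<le> norm w0 + 1"
      using norm_triangle_sub[of "u t" w0] unfolding dist_norm by linarith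
  qed
  then have "eventually (\<lambda>t. AE x in M.
      norm (indicator A x * exp (u t \<bullet> x * inverse t - (norm x)\<^sup>2 / 2 * (inverse t)\<^sup>2)) \<le> C) at_top"
  proof (elim eventually_mono, intro AE_I2)
    fix t x
    assume "norm (u t) \<le> norm w0 + 1"
    then have "exp (u t \<bullet> x * inverse t - (norm x)\<^sup>2 / 2 * (inverse t)\<^sup>2) \<le> C"
      unfolding C_def by (rule exp_inner_mult_le)
    then show "norm (indicator A x * exp (u t \<bullet> x * inverse t - (norm x)\<^sup>2 / 2 * (inverse t)\<^sup>2)) \<le> C"
      by (auto simp: indicator_def C_def)
  qed
  then have "((\<lambda>t. \<integral>x. indicator A x * exp (u t \<bullet> x * inverse t - (norm x)\<^sup>2 / 2 * (inverse t)\<^sup>2) \<partial>M)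
      \<longlongrightarrow> (\<integral>x. indicator A x * exp (w0 \<bullet> x * 0 - (norm x)\<^sup>2 / 2 * 0\<^sup>2) \<partial>M)) at_top"
    by (intro integral_dominated_convergence_at_top[where w="\<lambda>_. C"] AE_I2 tendsto_intros u
        tendsto_inverse_0_at_top filterlim_ident) auto
  then show ?thesis
    by simp
qed

lemma post_prob_tendsto_prior:
  assumes w: "((\<lambda>t. inverse t *\<^sub>R w t) \<longlongrightarrow> w0) at_top" and [measurable]: "B \<in> sets borel"
  shows "((\<lambda>t. post_prob M t B (w t)) \<longlongrightarrow> prob B) at_top"
proof -
  let ?E = "\<lambda>t x. exp ((inverse t *\<^sub>R w t) \<bullet> x * inverse t - (norm x)\<^sup>2 / 2 * (inverse t)\<^sup>2)"
  have "eventually (\<lambda>t. post_prob M t B (w t)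
      = (\<integral>x. indicator B x * ?E t x \<partial>M) / (\<integral>x. indicator UNIV x * ?E t x \<partial>M)) at_top"
    using eventually_gt_at_top[of 0]
  proof eventually_elim
    case (elim t)
    then have "gauss t (w t) \<noteq> 0"
      using gauss_pos[of t "w t"] by simp
    then show ?case
      by (simp add: post_prob_def gauss_diff_eq_mult_exp mult.assoc[symmetric])
  qed
  moreover have "((\<lambda>t. (\<integral>x. indicator B x * ?E t x \<partial>M) / (\<integral>x. indicator UNIV x * ?E t x \<partial>M))
      \<longlongrightarrow> prob B / prob UNIV) at_top"
    using prob_space by (intro tendsto_divide tendsto_integral_indicator_mult_exp[OF w]) auto
  ultimately show ?thesis
    using prob_space by (simp add: tendsto_cong)
qed

end

section \<open>Exchangeable priors\<close>

lemma mult_one_minus_le_abs_diff_indicator: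
  fixes q :: real
  assumes "0 \<le> q" "q \<le> 1"
  shows "q * (1 - q) \<le> \<bar>q - indicator S x\<bar>"
  using assms mult_left_le_one_le[of "1 - q" q] mult_right_le_one_le[of q "1 - q"]
  by (auto simp: indicator_def)

locale exchangeable_prior = gaussian_noise M for M :: "(real ^ ('n::{finite,linorder})) measure" +
  assumes exchangeable: "exchangeable M"
    and square_integrable: "\<And>k. integrable M (\<lambda>x. (x $ k)\<^sup>2)"
    and AE_inj: "AE x in M. inj (\<lambda>i. x $ i)"
begin

lemma integral_perm_vec:
  fixes f :: "(real, 'n) vec \<Rightarrow> real"
  assumes "p permutes UNIV" and [measurable]: "f \<in> borel_measurable borel"
  shows "(\<integral>x. f (perm_vec p x) \<partial>M) = (\<integral>x. f x \<partial>M)"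
proof -
  have "(\<integral>x. f x \<partial>M) = (\<integral>x. f x \<partial>distr M borel (perm_vec p))"
    using exchangeable assms(1) by (simp add: exchangeable_def)
  also have "\<dots> = (\<integral>x. f (perm_vec p x) \<partial>M)"
    by (rule integral_distr) simp_all
  finally show ?thesis ..
qed

lemma prob_ascending: "prob ascending = 1 / fact CARD('n)"
proof -
  have sum_1: "AE x in M. (\<Sum>p\<in>{p. p permutes (UNIV :: 'n set)}. indicator ascending (perm_vec p x)) = (1 :: real)"
    using AE_inj by eventually_elim (rule sum_indicator_perm_ascending)
  have "(\<integral>x. (\<Sum>p\<in>{p. p permutes (UNIV :: 'n set)}. indicator ascending (perm_vec p x) :: real) \<partial>M)
      = (\<integral>x. 1 \<partial>M)"
    using sum_1 by (intro integral_cong_AE) auto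
  then have "1 = (\<integral>x. (\<Sum>p\<in>{p. p permutes (UNIV :: 'n set)}. indicator ascending (perm_vec p x) :: real) \<partial>M)"
    using prob_space by simp
  also have "\<dots> = (\<Sum>p\<in>{p. p permutes (UNIV :: 'n set)}. \<integral>x. indicator ascending (perm_vec p x) \<partial>M)"
    by (intro Bochner_Integration.integral_sum integrable_const_bound[where B=1]) auto
  also have "\<dots> = (\<Sum>p\<in>{p. p permutes (UNIV :: 'n set)}. prob ascending)"
    by (intro sum.cong refl) (simp add: integral_perm_vec)
  also have "\<dots> = fact CARD('n) * prob ascending"
    by (simp add: card_permutations)
  finally show ?thesis
    by (simp add: field_simps)
qed

lemma post_prob_perm_vec:
  assumes p: "p permutes UNIV" and [measurable]: "B \<in> sets borel"
  shows "post_prob M \<sigma> B (perm_vec p y) = post_prob M \<sigma> (perm_vec p -` B) y"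
proof -
  have "(\<integral>x. indicator B x * gauss \<sigma> (perm_vec p y - x) \<partial>M)
      = (\<integral>x. indicator (perm_vec p -` B) x * gauss \<sigma> (y - x) \<partial>M)"
    by (subst integral_perm_vec[OF p, symmetric])
       (simp_all add: perm_vec_diff[symmetric] gauss_perm_vec[OF p] indicator_vimage)
  moreover have "(\<integral>x. gauss \<sigma> (perm_vec p y - x) \<partial>M) = (\<integral>x. gauss \<sigma> (y - x) \<partial>M)"
    by (subst integral_perm_vec[OF p, symmetric])
       (simp_all add: perm_vec_diff[symmetric] gauss_perm_vec[OF p])
  ultimately show ?thesis
    by (simp add: post_prob_def)
qed

lemma gfun_perm_vec:
  assumes "p permutes UNIV"
  shows "gfun M \<sigma> (perm_vec p y) = post_prob M \<sigma> (perm_vec p -` ascending) y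
    * (1 - post_prob M \<sigma> (perm_vec p -` ascending) y)"
  using assms by (simp add: gfun_def post_prob_perm_vec)

lemma gfun_nonneg: "0 \<le> gfun M \<sigma> y"
  unfolding gfun_def using post_prob_nonneg post_prob_le_1[OF ascending_borel] by simp

lemma gfun_le_1: "gfun M \<sigma> y \<le> 1"
  unfolding gfun_def using post_prob_nonneg post_prob_le_1[OF ascending_borel]
  by (intro mult_le_one) auto

lemma gfun_measurable[measurable]: "gfun M \<sigma> \<in> borel_measurable borel"
  unfolding gfun_def[abs_def] by measurable

lemma integrable_norm_sq: "integrable M (\<lambda>x. (norm x)\<^sup>2)"
proof -
  have "(norm x)\<^sup>2 = (\<Sum>k\<in>UNIV. (x $ k)\<^sup>2)" for x :: "(real, 'n) vec"
    by (simp add: norm_vec_def L2_set_def sum_nonneg)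
  then show ?thesis
    using square_integrable by simp
qed

lemma integrable_XZ_norm_sq_mult:
  assumes [measurable]: "h \<in> borel_measurable XZ" and "\<And>\<omega>. \<bar>h \<omega>\<bar> \<le> 1"
  shows "integrable XZ (\<lambda>\<omega>. (norm (fst \<omega>))\<^sup>2 * h \<omega>)"
  using assms
  by (intro Bochner_Integration.integrable_bound[OF integrable_XZ_fst[OF integrable_norm_sq]])
     (auto simp: abs_mult mult_left_le)

lemma AE_XZ_inj_fst: "AE \<omega> in XZ. inj (\<lambda>i. fst \<omega> $ i)"
proof (rule XZ.AE_pair_measure)
  show "{\<omega> \<in> space XZ. inj (\<lambda>i. fst \<omega> $ i)} \<in> sets XZ"
    by measurable
  show "AE x in M. AE z in std_normal. inj (\<lambda>i. fst (x, z) $ i)"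
    by (rule AE_mp[OF AE_inj]) (auto intro!: AE_I2)
qed

abbreviation Delta_num :: "('n \<Rightarrow> 'n) \<Rightarrow> real \<Rightarrow> real" where
  "Delta_num p \<sigma> \<equiv> joint_exp M \<sigma> (\<lambda>x y. indicator ascending y * (norm x)\<^sup>2 * gfun M \<sigma> (perm_vec p y))"

abbreviation Delta_den :: "real \<Rightarrow> real" where
  "Delta_den \<sigma> \<equiv> joint_exp M \<sigma> (\<lambda>x y. indicator ascending y)"

lemma integrable_XZ_Delta_num:
  "integrable XZ (\<lambda>\<omega>. indicator ascending (fst \<omega> + \<sigma> *\<^sub>R snd \<omega>) * (norm (fst \<omega>))\<^sup>2
    * gfun M \<sigma> (perm_vec p (fst \<omega> + \<sigma> *\<^sub>R snd \<omega>)))"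
proof -
  have "integrable XZ (\<lambda>\<omega>. (norm (fst \<omega>))\<^sup>2
    * (indicator ascending (fst \<omega> + \<sigma> *\<^sub>R snd \<omega>) * gfun M \<sigma> (perm_vec p (fst \<omega> + \<sigma> *\<^sub>R snd \<omega>))))"
    using gfun_nonneg gfun_le_1 by (intro integrable_XZ_norm_sq_mult) (auto simp: indicator_def)
  then show ?thesis
    by (simp add: ac_simps)
qed

lemma Delta_num_eq_integral_XZ:
  assumes "0 < \<sigma>"
  shows "Delta_num p \<sigma> = (\<integral>\<omega>. indicator ascending (fst \<omega> + \<sigma> *\<^sub>R snd \<omega>) * (norm (fst \<omega>))\<^sup>2
    * gfun M \<sigma> (perm_vec p (fst \<omega> + \<sigma> *\<^sub>R snd \<omega>)) \<partial>XZ)"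
  by (rule joint_exp_eq_integral_XZ[OF assms _ integrable_XZ_Delta_num]) measurable

lemma Delta_den_eq_integral_XZ:
  assumes "0 < \<sigma>"
  shows "Delta_den \<sigma> = (\<integral>\<omega>. indicator ascending (fst \<omega> + \<sigma> *\<^sub>R snd \<omega>) \<partial>XZ)"
  by (rule joint_exp_eq_integral_XZ[OF assms])
     (auto intro!: XZ.P.integrable_const_bound[where B=1] simp: indicator_def)

text \<open>The limit \<open>\<sigma> \<rightarrow> 0\<^sup>+\<close> is taken along \<open>\<sigma> = 1 / t\<close> with \<open>t \<rightarrow> \<infinity>\<close>, where the library provides
  dominated convergence.\<close>

lemma AE_tendsto_indicator_small_noise:
  assumes "p permutes UNIV"
  shows "AE \<omega> in XZ. ((\<lambda>t. indicator ascending (perm_vec p (fst \<omega> + inverse t *\<^sub>R snd \<omega>)) :: real)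
    \<longlongrightarrow> indicator ascending (perm_vec p (fst \<omega>))) at_top"
  using AE_XZ_inj_fst
proof eventually_elim
  case (elim \<omega>)
  have "inj (\<lambda>i. perm_vec p (fst \<omega>) $ i)"
    using elim permutes_inj[OF assms] by (simp add: inj_compose[unfolded comp_def])
  moreover have "((\<lambda>t. perm_vec p (fst \<omega> + inverse t *\<^sub>R snd \<omega>)) \<longlongrightarrow> perm_vec p (fst \<omega> + 0 *\<^sub>R snd \<omega>)) at_top"
    by (intro tendsto_perm_vec tendsto_intros tendsto_inverse_0_at_top filterlim_ident)
  ultimately show ?case
    by (intro tendsto_indicator_ascending) simp_all
qed

lemma tendsto_Delta_den_small_noise: "((\<lambda>t. Delta_den (inverse t)) \<longlongrightarrow> prob ascending) at_top"
proof -
  have "((\<lambda>t. \<integral>\<omega>. indicator ascending (fst \<omega> + inverse t *\<^sub>R snd \<omega>) \<partial>XZ)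
      \<longlongrightarrow> (\<integral>\<omega>. (indicator ascending (fst \<omega>) :: real) \<partial>XZ)) at_top"
    using AE_tendsto_indicator_small_noise[OF permutes_id]
    by (intro integral_dominated_convergence_at_top[where w="\<lambda>_. 1"]) (auto simp: indicator_def)
  moreover have "eventually (\<lambda>t. Delta_den (inverse t)
      = (\<integral>\<omega>. indicator ascending (fst \<omega> + inverse t *\<^sub>R snd \<omega>) \<partial>XZ)) at_top"
    using eventually_gt_at_top[of 0] by eventually_elim (simp add: Delta_den_eq_integral_XZ)
  ultimately show ?thesis
    by (simp add: tendsto_cong integral_XZ_fst)
qed

lemma tendsto_integral_indicator_diff_sq_small_noise:
  assumes "p permutes UNIV"
  shows "((\<lambda>t. \<integral>\<omega>. (indicator (perm_vec p -` ascending) (fst \<omega> + inverse t *\<^sub>R snd \<omega>)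
    - indicator (perm_vec p -` ascending) (fst \<omega>) :: real)\<^sup>2 \<partial>XZ) \<longlongrightarrow> 0) at_top"
proof -
  have "AE \<omega> in XZ. ((\<lambda>t. (indicator (perm_vec p -` ascending) (fst \<omega> + inverse t *\<^sub>R snd \<omega>)
    - indicator (perm_vec p -` ascending) (fst \<omega>) :: real)\<^sup>2) \<longlongrightarrow> 0) at_top"
    using AE_tendsto_indicator_small_noise[OF assms]
    by eventually_elim (auto simp: indicator_vimage intro: tendsto_eq_intros)
  then have "((\<lambda>t. \<integral>\<omega>. (indicator (perm_vec p -` ascending) (fst \<omega> + inverse t *\<^sub>R snd \<omega>)
    - indicator (perm_vec p -` ascending) (fst \<omega>) :: real)\<^sup>2 \<partial>XZ) \<longlongrightarrow> (\<integral>\<omega>. 0 \<partial>XZ)) at_top"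
    by (intro integral_dominated_convergence_at_top[where w="\<lambda>_. 1"]) (auto simp: indicator_def)
  then show ?thesis
    by simp
qed

lemma Delta_num_integrand_le:
  assumes "p permutes UNIV"
  shows "indicator ascending y * (norm x)\<^sup>2 * gfun M \<sigma> (perm_vec p y)
    \<le> (norm x)\<^sup>2 * \<bar>post_prob M \<sigma> (perm_vec p -` ascending) y - indicator (perm_vec p -` ascending) x\<bar>"
proof -
  have "indicator ascending y * gfun M \<sigma> (perm_vec p y) \<le> gfun M \<sigma> (perm_vec p y)"
    using gfun_nonneg gfun_le_1 by (simp add: indicator_def)
  also have "\<dots> \<le> \<bar>post_prob M \<sigma> (perm_vec p -` ascending) y - indicator (perm_vec p -` ascending) x\<bar>"
    unfolding gfun_perm_vec[OF assms]
    using post_prob_nonneg post_prob_le_1 by (intro mult_one_minus_le_abs_diff_indicator) auto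
  finally have "indicator ascending y * gfun M \<sigma> (perm_vec p y)
    \<le> \<bar>post_prob M \<sigma> (perm_vec p -` ascending) y - indicator (perm_vec p -` ascending) x\<bar>" .
  from mult_left_mono[OF this, of "(norm x)\<^sup>2"] show ?thesis
    by (simp add: ac_simps)
qed

lemma tendsto_integral_post_prob_diff_sq_small_noise:
  assumes "p permutes UNIV"
  shows "((\<lambda>t. \<integral>\<omega>. (post_prob M (inverse t) (perm_vec p -` ascending) (fst \<omega> + inverse t *\<^sub>R snd \<omega>)
    - indicator (perm_vec p -` ascending) (fst \<omega>))\<^sup>2 \<partial>XZ) \<longlongrightarrow> 0) at_top"
proof (rule tendsto_sandwich[OF _ _ tendsto_const tendsto_integral_indicator_diff_sq_small_noise[OF assms]])
  show "eventually (\<lambda>t. 0 \<le> (\<integral>\<omega>. (post_prob M (inverse t) (perm_vec p -` ascending)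
    (fst \<omega> + inverse t *\<^sub>R snd \<omega>) - indicator (perm_vec p -` ascending) (fst \<omega>))\<^sup>2 \<partial>XZ)) at_top"
    by simp
  show "eventually (\<lambda>t. (\<integral>\<omega>. (post_prob M (inverse t) (perm_vec p -` ascending)
    (fst \<omega> + inverse t *\<^sub>R snd \<omega>) - indicator (perm_vec p -` ascending) (fst \<omega>))\<^sup>2 \<partial>XZ)
    \<le> (\<integral>\<omega>. (indicator (perm_vec p -` ascending) (fst \<omega> + inverse t *\<^sub>R snd \<omega>)
      - indicator (perm_vec p -` ascending) (fst \<omega>))\<^sup>2 \<partial>XZ)) at_top"
    using eventually_gt_at_top[of 0]
    by eventually_elim (simp add: integral_XZ_post_prob_sq_le)
qed

lemma tendsto_Delta_num_small_noise:
  assumes p: "p permutes UNIV"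
  shows "((\<lambda>t. Delta_num p (inverse t)) \<longlongrightarrow> 0) at_top"
proof -
  define B where "B = perm_vec p -` ascending"
  define d where "d t \<omega> = post_prob M (inverse t) B (fst \<omega> + inverse t *\<^sub>R snd \<omega>) - indicator B (fst \<omega>)"
    for t \<omega>
  have d_measurable: "d t \<in> borel_measurable XZ" for t
    unfolding d_def B_def by measurable
  have d_bounded: "\<bar>d t \<omega>\<bar> \<le> 1" for t \<omega>
    using post_prob_nonneg[of "inverse t" B "fst \<omega> + inverse t *\<^sub>R snd \<omega>"]
      post_prob_le_1[of B "inverse t" "fst \<omega> + inverse t *\<^sub>R snd \<omega>"]
    by (auto simp: d_def B_def indicator_def)
  have weighted: "((\<lambda>t. \<integral>\<omega>. (norm (fst \<omega>))\<^sup>2 * \<bar>d t \<omega>\<bar> \<partial>XZ) \<longlongrightarrow> 0) at_top"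
    using integrable_XZ_fst[OF integrable_norm_sq] d_measurable d_bounded
      tendsto_integral_post_prob_diff_sq_small_noise[OF p]
    by (intro XZ.P.tendsto_integral_mult_abs_zero) (auto simp: d_def B_def)
  have upper: "Delta_num p (inverse t) \<le> (\<integral>\<omega>. (norm (fst \<omega>))\<^sup>2 * \<bar>d t \<omega>\<bar> \<partial>XZ)" if "0 < t" for t
  proof -
    have "integrable XZ (\<lambda>\<omega>. (norm (fst \<omega>))\<^sup>2 * \<bar>d t \<omega>\<bar>)"
      using d_measurable d_bounded by (intro integrable_XZ_norm_sq_mult) auto
    then show ?thesis
      unfolding Delta_num_eq_integral_XZ[OF \<open>0 < t\<close>[THEN positive_imp_inverse_positive]] d_def B_def
      by (intro integral_mono integrable_XZ_Delta_num Delta_num_integrand_le p)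
  qed
  have "eventually (\<lambda>t. Delta_num p (inverse t) \<le> (\<integral>\<omega>. (norm (fst \<omega>))\<^sup>2 * \<bar>d t \<omega>\<bar> \<partial>XZ)) at_top"
    using eventually_gt_at_top[of 0] by eventually_elim (rule upper)
  moreover have "0 \<le> Delta_num p (inverse t)" for t
    by (intro joint_exp_nonneg mult_nonneg_nonneg gfun_nonneg) auto
  ultimately show ?thesis
    by (intro tendsto_sandwich[OF _ _ tendsto_const weighted]) auto
qed

lemma tendsto_Delta_up_small_noise: "(Delta_up M \<longlongrightarrow> 0) (at_right 0)"
proof -
  have "((\<lambda>t. \<Sum>p\<in>{p. p permutes (UNIV :: 'n set)}. Delta_num p (inverse t) / Delta_den (inverse t))
      \<longlongrightarrow> (\<Sum>p\<in>{p. p permutes (UNIV :: 'n set)}. 0 / prob ascending)) at_top"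
    by (intro tendsto_sum tendsto_divide tendsto_Delta_num_small_noise tendsto_Delta_den_small_noise)
       (simp_all add: prob_ascending)
  then show ?thesis
    by (simp add: filterlim_at_right_to_top Delta_up_def)
qed

lemma AE_tendsto_indicator_large_noise:
  "AE \<omega> in XZ. ((\<lambda>t. indicator ascending (fst \<omega> + t *\<^sub>R snd \<omega>) :: real)
    \<longlongrightarrow> indicator ascending (snd \<omega>)) at_top"
  using AE_XZ_inj_snd
proof eventually_elim
  case (elim \<omega>)
  have "((\<lambda>t. indicator ascending (inverse t *\<^sub>R fst \<omega> + snd \<omega>) :: real)
      \<longlongrightarrow> indicator ascending (0 *\<^sub>R fst \<omega> + snd \<omega>)) at_top"
    using elim
    by (intro tendsto_indicator_ascending tendsto_intros tendsto_inverse_0_at_top filterlim_ident) simp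
  moreover have "eventually (\<lambda>t. indicator ascending (inverse t *\<^sub>R fst \<omega> + snd \<omega>)
      = (indicator ascending (fst \<omega> + t *\<^sub>R snd \<omega>) :: real)) at_top"
    using eventually_gt_at_top[of 0]
  proof eventually_elim
    case (elim t)
    then have "inverse t *\<^sub>R (fst \<omega> + t *\<^sub>R snd \<omega>) = inverse t *\<^sub>R fst \<omega> + snd \<omega>"
      by (simp add: scaleR_add_right)
    then show ?case
      using ascending_scaleR[of "inverse t" "fst \<omega> + t *\<^sub>R snd \<omega>"] elim by (simp add: indicator_def)
  qed
  ultimately show ?case
    by (simp add: tendsto_cong)
qed

lemma tendsto_Delta_den_large_noise:
  "((\<lambda>t. Delta_den t) \<longlongrightarrow> measure (std_normal :: (real, 'n) vec measure) ascending) at_top"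
proof -
  have "((\<lambda>t. \<integral>\<omega>. indicator ascending (fst \<omega> + t *\<^sub>R snd \<omega>) \<partial>XZ)
      \<longlongrightarrow> (\<integral>\<omega>. (indicator ascending (snd \<omega>) :: real) \<partial>XZ)) at_top"
    using AE_tendsto_indicator_large_noise
    by (intro integral_dominated_convergence_at_top[where w="\<lambda>_. 1"]) (auto simp: indicator_def)
  moreover have "(\<integral>\<omega>. indicator ascending (snd \<omega>) \<partial>XZ) = measure (std_normal :: (real, 'n) vec measure) ascending"
    using integral_XZ_mult[of "\<lambda>_. 1" "indicator ascending"] prob_space
    by (simp add: XZ.P.integrable_const_bound[where B=1])
  moreover have "eventually (\<lambda>t. Delta_den t
      = (\<integral>\<omega>. indicator ascending (fst \<omega> + t *\<^sub>R snd \<omega>) \<partial>XZ)) at_top"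
    using eventually_gt_at_top[of 0] by eventually_elim (simp add: Delta_den_eq_integral_XZ)
  ultimately show ?thesis
    by (simp add: tendsto_cong)
qed

lemma tendsto_gfun_large_noise:
  assumes "p permutes UNIV"
  shows "((\<lambda>t. gfun M t (perm_vec p (x + t *\<^sub>R z))) \<longlongrightarrow> prob ascending * (1 - prob ascending)) at_top"
proof -
  have "((\<lambda>t. perm_vec p (inverse t *\<^sub>R x + (inverse t * t) *\<^sub>R z))
      \<longlongrightarrow> perm_vec p (0 *\<^sub>R x + 1 *\<^sub>R z)) at_top"
    by (intro tendsto_perm_vec tendsto_intros tendsto_inverse_0_at_top filterlim_ident
        tendsto_eventually eventually_mono[OF eventually_gt_at_top[of 0]]) simp
  then have "((\<lambda>t. inverse t *\<^sub>R perm_vec p (x + t *\<^sub>R z)) \<longlongrightarrow> perm_vec p z) at_top"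
    by (simp add: perm_vec_scaleR[symmetric] scaleR_add_right)
  from post_prob_tendsto_prior[OF this ascending_borel]
  show ?thesis
    unfolding gfun_def by (intro tendsto_intros)
qed

lemma tendsto_Delta_num_large_noise:
  assumes "p permutes UNIV"
  shows "((\<lambda>t. Delta_num p t) \<longlongrightarrow> prob ascending * (1 - prob ascending)
    * ((\<integral>x. (norm x)\<^sup>2 \<partial>M) * measure (std_normal :: (real, 'n) vec measure) ascending)) at_top"
proof -
  let ?c = "prob ascending * (1 - prob ascending)"
  let ?Y = "\<lambda>t \<omega>. fst \<omega> + t *\<^sub>R snd \<omega>"
  have lim: "((\<lambda>t. \<integral>\<omega>. indicator ascending (?Y t \<omega>) * (norm (fst \<omega>))\<^sup>2 * gfun M t (perm_vec p (?Y t \<omega>)) \<partial>XZ)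
    \<longlongrightarrow> (\<integral>\<omega>. ?c * ((norm (fst \<omega>))\<^sup>2 * indicator ascending (snd \<omega>)) \<partial>XZ)) at_top"
  proof (rule integral_dominated_convergence_at_top[where w="\<lambda>\<omega>. (norm (fst \<omega>))\<^sup>2"])
    show "AE \<omega> in XZ. ((\<lambda>t. indicator ascending (?Y t \<omega>) * (norm (fst \<omega>))\<^sup>2
        * gfun M t (perm_vec p (?Y t \<omega>))) \<longlongrightarrow> ?c * ((norm (fst \<omega>))\<^sup>2 * indicator ascending (snd \<omega>))) at_top"
      using AE_tendsto_indicator_large_noise
    proof eventually_elim
      case (elim \<omega>)
      have "((\<lambda>t. indicator ascending (?Y t \<omega>) * (norm (fst \<omega>))\<^sup>2 * gfun M t (perm_vec p (?Y t \<omega>)))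
          \<longlongrightarrow> indicator ascending (snd \<omega>) * (norm (fst \<omega>))\<^sup>2 * ?c) at_top"
        by (intro tendsto_intros elim tendsto_gfun_large_noise assms)
      then show ?case
        by (rule tendsto_eq_rhs) (simp add: ac_simps)
    qed
    show "eventually (\<lambda>t. AE \<omega> in XZ. norm (indicator ascending (?Y t \<omega>) * (norm (fst \<omega>))\<^sup>2
        * gfun M t (perm_vec p (?Y t \<omega>))) \<le> (norm (fst \<omega>))\<^sup>2) at_top"
      using gfun_nonneg gfun_le_1
      by (intro always_eventually allI AE_I2) (auto simp: indicator_def abs_mult mult_left_le)
  qed (use integrable_XZ_fst[OF integrable_norm_sq] in auto)
  have limit_eq: "(\<integral>\<omega>. ?c * ((norm (fst \<omega>))\<^sup>2 * indicator ascending (snd \<omega>)) \<partial>XZ)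
      = ?c * ((\<integral>x. (norm x)\<^sup>2 \<partial>M) * measure (std_normal :: (real, 'n) vec measure) ascending)"
  proof -
    have "integrable XZ (\<lambda>\<omega>. (norm (fst \<omega>))\<^sup>2 * indicator ascending (snd \<omega>))"
      by (intro integrable_XZ_norm_sq_mult) (auto simp: indicator_def)
    then have "(\<integral>\<omega>. (norm (fst \<omega>))\<^sup>2 * indicator ascending (snd \<omega>) \<partial>XZ)
        = (\<integral>x. (norm x)\<^sup>2 \<partial>M) * measure (std_normal :: (real, 'n) vec measure) ascending"
      by (subst integral_XZ_mult[of "\<lambda>x. (norm x)\<^sup>2" "indicator ascending"]) simp_all
    then show ?thesis
      by simp
  qed
  have "eventually (\<lambda>t. Delta_num p t = (\<integral>\<omega>. indicator ascending (?Y t \<omega>)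
      * (norm (fst \<omega>))\<^sup>2 * gfun M t (perm_vec p (?Y t \<omega>)) \<partial>XZ)) at_top"
    using eventually_gt_at_top[of 0] by eventually_elim (rule Delta_num_eq_integral_XZ)
  then show ?thesis
    using lim unfolding limit_eq by (subst tendsto_cong)
qed

lemma tendsto_Delta_up_large_noise:
  "(Delta_up M \<longlongrightarrow> (\<integral>x. (norm x)\<^sup>2 \<partial>M) * (1 - 1 / fact CARD('n))) at_top"
proof -
  let ?N = "measure std_normal (ascending :: (real, 'n) vec set)"
  let ?E = "\<integral>x. (norm x)\<^sup>2 \<partial>M"
  have "?N \<noteq> 0"
    using std_normal_ascending_pos[where 'n='n] by simp
  then have "((\<lambda>t. \<Sum>p\<in>{p. p permutes (UNIV :: 'n set)}. Delta_num p t / Delta_den t)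
      \<longlongrightarrow> (\<Sum>p\<in>{p. p permutes (UNIV :: 'n set)}.
        prob ascending * (1 - prob ascending) * (?E * ?N) / ?N)) at_top"
    by (intro tendsto_sum tendsto_divide tendsto_Delta_num_large_noise tendsto_Delta_den_large_noise) auto
  also have "(\<Sum>p\<in>{p. p permutes (UNIV :: 'n set)}. prob ascending * (1 - prob ascending) * (?E * ?N) / ?N)
      = ?E * (1 - 1 / fact CARD('n))"
    using \<open>?N \<noteq> 0\<close> by (simp add: card_permutations prob_ascending field_simps)
  finally show ?thesis
    by (simp add: Delta_up_def[abs_def])
qed

end

theorem theorem4:
  fixes M :: "(real ^ ('n::{finite,linorder})) measure"
  assumes "prob_space M"
    and "sets M = sets borel"
    and "exchangeable M"
    and "\<And>k. integrable M (\<lambda>x. (x $ k)\<^sup>2)"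
    and "AE x in M. inj (\<lambda>i. x $ i)"
  shows "(Delta_up M \<longlongrightarrow> 0) (at_right 0) \<and>
         (Delta_up M \<longlongrightarrow> (\<integral>x. (norm x)\<^sup>2 \<partial>M) * (1 - 1 / fact CARD('n))) at_top"
proof -
  interpret exchangeable_prior M
    using assms
    by (simp add: exchangeable_prior_def exchangeable_prior_axioms_def gaussian_noise_def
        gaussian_noise_axioms_def)
  show ?thesis
    using tendsto_Delta_up_small_noise tendsto_Delta_up_large_noise by simp
qed

end
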